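(* Consider a system with a finite set $S$ of tasks and minimum average reward requirements $q^*_X>0$ (as in the context), and a scheduling policy $\eta$ under which the evolution of the system state $D(k)=[d_X(k) : X\in S]$, $k=0,1,2,\dots$, is a Markov chain. If this Markov chain is irreducible and positive recurrent, then the system is fulfilled by $\eta$.
   Context: A system consists of a finite set $S$ of tasks. Time is slotted, $t\in\{0,1,2,\dots\}$. Each task $X\in S$ has a period $\tau_X$ (a positive integer); time is partitioned into consecutive periods of $X$ of $\tau_X$ slots each, the first starting at $t=0$, and in each period $X$ has one job, removed at the end of the period. Let $T=\mathrm{lcm}\{\tau_X : X\in S\}$; time is partitioned into consecutive frames of $T$ slots each, the $k$-th frame ($k=1,2,\dots$) being the $k$-th such block starting from $t=0$. A scheduling policy (possibly randomized) chooses in each slot either to idle or to execute the job of exactly one task. Each task $X$ has rewards $r^1_X\ge r^2_X\ge\dots\ge r^{\tau_X}_X\ge 0$: executing the job of $X$ for the $i$-th time within a period yields reward $r^i_X$ to $X$. Let $s_X(t)$ be the total reward obtained by $X$ between time 0 and $t$; the average reward is $q_X=\liminf_{t\to\infty}s_X(t)/(t/T)$. Each task has a requirement $q^*_X>0$; a policy fulfills the system if $q_X\ge q^*_X$ with probability 1 for all $X\in S$. Let $\tilde q_X(k)$ be the total reward obtained by $X$ during the $k$-th frame. The debt of $X$ is defined by $d_X(0)=0$ and $d_X(k)=[d_X(k-1)+q^*_X-\tilde q_X(k)]^+$ for $k>0$, where $[x]^+=\max\{x,0\}$. The state of the system at frame $k$ is the vector of debts $[d_X(k) : X\in S]$. 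*)

theory Defs
  imports "HOL-Probability.Probability"
begin

text \<open>A (realised) schedule is a function sg :: nat => 'x option: in slot t the job of
  task X is executed iff sg t = Some X, and the system idles iff sg t = None.
  Rewards r X i are indexed from i = 1 (the i-th execution within a period).\<close>

definition frame_len :: "'x set \<Rightarrow> ('x \<Rightarrow> nat) \<Rightarrow> nat" where
  "frame_len S tau = Lcm (tau ` S)"

definition exec_count :: "('x \<Rightarrow> nat) \<Rightarrow> (nat \<Rightarrow> 'x option) \<Rightarrow> 'x \<Rightarrow> nat \<Rightarrow> nat" where
  "exec_count tau sg X t =
     card {u. (t div tau X) * tau X \<le> u \<and> u \<le> t \<and> sg u = Some X}"

definition slot_reward ::
  "('x \<Rightarrow> nat) \<Rightarrow> ('x \<Rightarrow> nat \<Rightarrow> real) \<Rightarrow> (nat \<Rightarrow> 'x option) \<Rightarrow> 'x \<Rightarrow> nat \<Rightarrow> real" where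
  "slot_reward tau r sg X t =
     (if sg t = Some X then r X (exec_count tau sg X t) else 0)"

definition cum_reward ::
  "('x \<Rightarrow> nat) \<Rightarrow> ('x \<Rightarrow> nat \<Rightarrow> real) \<Rightarrow> (nat \<Rightarrow> 'x option) \<Rightarrow> 'x \<Rightarrow> nat \<Rightarrow> real" where
  "cum_reward tau r sg X t = (\<Sum>u<t. slot_reward tau r sg X u)"

definition frame_reward ::
  "'x set \<Rightarrow> ('x \<Rightarrow> nat) \<Rightarrow> ('x \<Rightarrow> nat \<Rightarrow> real) \<Rightarrow> (nat \<Rightarrow> 'x option) \<Rightarrow> 'x \<Rightarrow> nat \<Rightarrow> real" where
  "frame_reward S tau r sg X k =
     (\<Sum>u\<in>{(k - 1) * frame_len S tau..<k * frame_len S tau}. slot_reward tau r sg X u)"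

primrec debt ::
  "'x set \<Rightarrow> ('x \<Rightarrow> nat) \<Rightarrow> ('x \<Rightarrow> nat \<Rightarrow> real) \<Rightarrow> ('x \<Rightarrow> real) \<Rightarrow> (nat \<Rightarrow> 'x option)
     \<Rightarrow> 'x \<Rightarrow> nat \<Rightarrow> real" where
  "debt S tau r qs sg X 0 = 0"
| "debt S tau r qs sg X (Suc k) =
     max 0 (debt S tau r qs sg X k + qs X - frame_reward S tau r sg X (Suc k))"

definition sys_state ::
  "'x set \<Rightarrow> ('x \<Rightarrow> nat) \<Rightarrow> ('x \<Rightarrow> nat \<Rightarrow> real) \<Rightarrow> ('x \<Rightarrow> real) \<Rightarrow> (nat \<Rightarrow> 'x option)
     \<Rightarrow> nat \<Rightarrow> ('x \<Rightarrow> real)" where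
  "sys_state S tau r qs sg k = (\<lambda>X\<in>S. debt S tau r qs sg X k)"

definition avg_reward ::
  "'x set \<Rightarrow> ('x \<Rightarrow> nat) \<Rightarrow> ('x \<Rightarrow> nat \<Rightarrow> real) \<Rightarrow> (nat \<Rightarrow> 'x option) \<Rightarrow> 'x \<Rightarrow> ereal" where
  "avg_reward S tau r sg X =
     liminf (\<lambda>t. ereal (cum_reward tau r sg X t / (real t / real (frame_len S tau))))"

primrec nstep :: "('s \<Rightarrow> 's pmf) \<Rightarrow> nat \<Rightarrow> 's \<Rightarrow> 's pmf" where
  "nstep p 0 s = return_pmf s"
| "nstep p (Suc n) s = bind_pmf (nstep p n s) p"

definition markov_chain_with :: "'w measure \<Rightarrow> ('w \<Rightarrow> nat \<Rightarrow> 's) \<Rightarrow> ('s \<Rightarrow> 's pmf) \<Rightarrow> bool" where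
  "markov_chain_with M Z p \<longleftrightarrow>
     (\<forall>k xs y. length xs = Suc k \<longrightarrow>
        measure M {w\<in>space M. (\<forall>i\<le>k. Z w i = xs ! i) \<and> Z w (Suc k) = y}
        = measure M {w\<in>space M. \<forall>i\<le>k. Z w i = xs ! i} * pmf (p (last xs)) y)"

definition reachable_states :: "('s \<Rightarrow> 's pmf) \<Rightarrow> 's \<Rightarrow> 's set" where
  "reachable_states p s0 = {s. \<exists>n. s \<in> set_pmf (nstep p n s0)}"

definition irreducible_on :: "('s \<Rightarrow> 's pmf) \<Rightarrow> 's set \<Rightarrow> bool" where
  "irreducible_on p A \<longleftrightarrow> (\<forall>s\<in>A. \<forall>t\<in>A. \<exists>n. t \<in> set_pmf (nstep p n s))"

text \<open>first_passage p t n x: probability that the chain started at x hits t for the first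
  time (at a positive time) at step n.\<close>
fun first_passage :: "('s \<Rightarrow> 's pmf) \<Rightarrow> 's \<Rightarrow> nat \<Rightarrow> 's \<Rightarrow> real" where
  "first_passage p t 0 x = 0"
| "first_passage p t (Suc 0) x = pmf (p x) t"
| "first_passage p t (Suc (Suc n)) x =
     measure_pmf.expectation (p x) (\<lambda>y. if y = t then 0 else first_passage p t (Suc n) y)"

definition positive_recurrent :: "('s \<Rightarrow> 's pmf) \<Rightarrow> 's \<Rightarrow> bool" where
  "positive_recurrent p s \<longleftrightarrow>
     summable (\<lambda>n. first_passage p s n s) \<and> (\<Sum>n. first_passage p s n s) = 1 \<and>
     summable (\<lambda>n. real n * first_passage p s n s)"

definition positive_recurrent_on :: "('s \<Rightarrow> 's pmf) \<Rightarrow> 's set \<Rightarrow> bool" where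
  "positive_recurrent_on p A \<longleftrightarrow> (\<forall>s\<in>A. positive_recurrent p s)"

end

theory Submission
  imports Defs
begin

text \<open>
  Positive recurrence of the all-zero debt vector means that the excursions of the debt
  chain away from it have finite mean length. Summing the tails of the return-time
  distribution, the probabilities that an excursion starting at frame \<open>j\<close> lasts longer than
  \<open>j / N\<close> frames are summable, so by Borel--Cantelli almost surely every excursion starting
  late enough is that short. Since all debts vanish at the start of an excursion and grow
  by at most \<open>q\<^sup>*\<^sub>X\<close> per frame, \<open>d\<^sub>X(k) \<le> k q\<^sup>*\<^sub>X / N\<close> eventually, i.e. the debts grow
  sublinearly. Finally the reward of the first \<open>k\<close> frames is at least \<open>k q\<^sup>*\<^sub>X - d\<^sub>X(k)\<close>,
  so the average reward is at least \<open>q\<^sup>*\<^sub>X\<close>.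
\<close>

section \<open>Walks of a Markov kernel\<close>

lemma measure_pmf_prob_bind_pmf:
  "measure_pmf.prob (bind_pmf N f) A = (\<integral>x. measure_pmf.prob (f x) A \<partial>measure_pmf N)"
  using measurable_measure_pmf[of f]
  unfolding measure_pmf_bind
  by (subst measure_pmf.measure_bind[where N="count_space UNIV"]) auto

lemma integrable_measure_pmf_bounded:
  fixes f :: "'a \<Rightarrow> real"
  assumes "\<And>x. \<bar>f x\<bar> \<le> B"
  shows "integrable (measure_pmf N) f"
  by (rule measure_pmf.integrable_const_bound[where B=B]) (auto simp: assms)

text \<open>\<open>walk p m x\<close> is the distribution of the states visited in the next \<open>m\<close> steps from
  \<open>x\<close>, the starting state excluded.\<close>
primrec walk :: "('s \<Rightarrow> 's pmf) \<Rightarrow> nat \<Rightarrow> 's \<Rightarrow> 's list pmf" where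
  "walk p 0 x = return_pmf []"
| "walk p (Suc m) x = bind_pmf (p x) (\<lambda>y. map_pmf ((#) y) (walk p m y))"

lemma length_walk: "ys \<in> set_pmf (walk p m x) \<Longrightarrow> length ys = m"
  by (induction m arbitrary: x ys) auto

lemma walk_add:
  "walk p (a + b) x = bind_pmf (walk p a x) (\<lambda>ys. map_pmf ((@) ys) (walk p b (last (x # ys))))"
proof (induction a arbitrary: x)
  case 0
  have "(@) [] = (\<lambda>zs::'a list. zs)" by auto
  then show ?case by (simp add: bind_return_pmf map_pmf_ident)
next
  case (Suc a)
  show ?case
    by (simp add: Suc map_bind_pmf bind_map_pmf bind_assoc_pmf map_pmf_comp)
      (intro bind_pmf_cong refl map_pmf_cong; simp)
qed

lemma walk_Suc_snoc:
  "walk p (Suc k) x = bind_pmf (walk p k x) (\<lambda>ys. map_pmf (\<lambda>y. ys @ [y]) (p (last (x # ys))))"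
  using walk_add[of p k 1 x] by (simp add: map_pmf_def bind_return_pmf bind_assoc_pmf)

lemma pmf_walk_snoc:
  "pmf (walk p (Suc k) x) (ys @ [y]) = pmf (walk p k x) ys * pmf (p (last (x # ys))) y"
proof -
  have "pmf (map_pmf (\<lambda>y'. zs @ [y']) (p (last (x # zs)))) (ys @ [y])
      = pmf (p (last (x # ys))) y * indicator {ys} zs" for zs
  proof (cases "zs = ys")
    case True
    have "inj (\<lambda>y'. ys @ [y'])" by (auto simp: inj_def)
    from pmf_map_inj'[OF this, of "p (last (x # ys))" y] True show ?thesis by simp
  next
    case False
    then have "ys @ [y] \<notin> (\<lambda>y'. zs @ [y']) ` set_pmf (p (last (x # zs)))" by auto
    with False show ?thesis by (simp add: pmf_map_outside)
  qed
  then have "pmf (walk p (Suc k) x) (ys @ [y])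
      = (\<integral>zs. pmf (p (last (x # ys))) y * indicator {ys} zs \<partial>walk p k x)"
    unfolding walk_Suc_snoc pmf_bind by (simp only:)
  then show ?thesis by (simp add: measure_pmf_single mult.commute)
qed

lemma prob_walk_shift_le:
  "measure_pmf.prob (walk p (a + b) x) {zs. last (x # take a zs) = t \<and> drop a zs \<in> C}
     \<le> measure_pmf.prob (walk p b t) C"
proof -
  let ?E = "{zs. last (x # take a zs) = t \<and> drop a zs \<in> C}"
  have "measure_pmf.prob (walk p (a + b) x) ?E
      = (\<integral>ys. measure_pmf.prob (walk p b (last (x # ys))) ((@) ys -` ?E) \<partial>walk p a x)"
    unfolding walk_add measure_pmf_prob_bind_pmf measure_map_pmf ..
  also have "\<dots> \<le> (\<integral>ys. measure_pmf.prob (walk p b t) C \<partial>walk p a x)"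
  proof (rule integral_mono_AE)
    show "integrable (walk p a x) (\<lambda>ys. measure_pmf.prob (walk p b (last (x # ys))) ((@) ys -` ?E))"
      by (rule integrable_measure_pmf_bounded[where B=1]) simp
    show "AE ys in walk p a x.
        measure_pmf.prob (walk p b (last (x # ys))) ((@) ys -` ?E) \<le> measure_pmf.prob (walk p b t) C"
      unfolding AE_measure_pmf_iff
    proof
      fix ys assume "ys \<in> set_pmf (walk p a x)"
      then have "(@) ys -` ?E = (if last (x # ys) = t then C else {})"
        by (auto dest: length_walk)
      then show "measure_pmf.prob (walk p b (last (x # ys))) ((@) ys -` ?E) \<le> measure_pmf.prob (walk p b t) C"
        by simp
    qed
  qed simp
  finally show ?thesis by simp
qed

lemma first_passage_bounds: "0 \<le> first_passage p t n x \<and> first_passage p t n x \<le> 1"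
proof (induction p t n x rule: first_passage.induct)
  case (3 p t n x)
  let ?f = "\<lambda>y. if y = t then 0 else first_passage p t (Suc n) y"
  have f: "0 \<le> ?f y \<and> ?f y \<le> 1" for y using 3 by auto
  have "measure_pmf.expectation (p x) ?f \<le> measure_pmf.expectation (p x) (\<lambda>_. 1)"
    by (rule integral_mono) (use f in \<open>auto intro: integrable_measure_pmf_bounded[where B=1]\<close>)
  moreover have "0 \<le> measure_pmf.expectation (p x) ?f"
    by (rule integral_nonneg_AE) (use f in auto)
  ultimately show ?case by simp
qed (auto simp: pmf_le_1)

lemma abs_first_passage_le_1: "\<bar>first_passage p t n x\<bar> \<le> 1"
  using first_passage_bounds[of p t n x] by simp

lemma first_passage_Suc:
  "first_passage p t (Suc n) x = (if n = 0 then pmf (p x) t else 0)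
     + (\<integral>y. (if y = t then 0 else first_passage p t n y) \<partial>p x)"
proof (cases n)
  case 0
  then have "(\<lambda>y. if y = t then 0 else first_passage p t n y) = (\<lambda>_. 0)" by auto
  with 0 show ?thesis by simp
next
  case (Suc k)
  then show ?thesis unfolding Suc by simp
qed

lemma sum_first_passage_Suc:
  "(\<Sum>n<Suc (Suc m). first_passage p t n x)
     = pmf (p x) t + (\<integral>y. (if y = t then 0 else \<Sum>n<Suc m. first_passage p t n y) \<partial>p x)"
proof -
  have "(\<Sum>n<Suc (Suc m). first_passage p t n x) = (\<Sum>n<Suc m. first_passage p t (Suc n) x)"
    by (subst sum.lessThan_Suc_shift) simp
  also have "\<dots> = pmf (p x) t + (\<Sum>n<Suc m. \<integral>y. (if y = t then 0 else first_passage p t n y) \<partial>p x)"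
    unfolding first_passage_Suc sum.distrib by (simp add: sum.lessThan_Suc_shift)
  also have "(\<Sum>n<Suc m. \<integral>y. (if y = t then 0 else first_passage p t n y) \<partial>p x)
      = (\<integral>y. (\<Sum>n<Suc m. if y = t then 0 else first_passage p t n y) \<partial>p x)"
    by (subst Bochner_Integration.integral_sum)
      (auto intro: integrable_measure_pmf_bounded[where B=1] simp: abs_first_passage_le_1)
  also have "\<dots> = (\<integral>y. (if y = t then 0 else \<Sum>n<Suc m. first_passage p t n y) \<partial>p x)"
    by (intro Bochner_Integration.integral_cong) simp_all
  finally show ?thesis .
qed

lemma prob_walk_avoids_Suc:
  "measure_pmf.prob (walk p (Suc m) x) {zs. \<forall>i<Suc m. zs ! i \<noteq> t}
     = (\<integral>y. (if y = t then 0 else measure_pmf.prob (walk p m y) {zs. \<forall>i<m. zs ! i \<noteq> t}) \<partial>p x)"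
proof -
  have "(#) y -` {zs. \<forall>i<Suc m. zs ! i \<noteq> t} = (if y = t then {} else {zs. \<forall>i<m. zs ! i \<noteq> t})" for y
    by (auto simp: less_Suc_eq_0_disj)
  then show ?thesis
    unfolding walk.simps measure_pmf_prob_bind_pmf measure_map_pmf
    by (intro Bochner_Integration.integral_cong) simp_all
qed

lemma prob_walk_avoids:
  "measure_pmf.prob (walk p m x) {zs. \<forall>i<m. zs ! i \<noteq> t} = 1 - (\<Sum>n<Suc m. first_passage p t n x)"
proof (induction m arbitrary: x)
  case (Suc m)
  define G where "G y = (\<Sum>n<Suc m. first_passage p t n y)" for y
  have "\<bar>G y\<bar> \<le> (\<Sum>n<Suc m. 1)" for y
    unfolding G_def by (rule order_trans[OF sum_abs sum_mono]) (rule abs_first_passage_le_1)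
  then have "\<bar>if y = t then 0 else G y\<bar> \<le> real (Suc m)" for y
    by simp
  then have int: "integrable (p x) (\<lambda>y. if y = t then 0 else G y)"
    by (rule integrable_measure_pmf_bounded)
  have "measure_pmf.prob (walk p (Suc m) x) {zs. \<forall>i<Suc m. zs ! i \<noteq> t}
      = (\<integral>y. (1 - indicator {t} y) - (if y = t then 0 else G y) \<partial>p x)"
    unfolding prob_walk_avoids_Suc Suc G_def
    by (intro Bochner_Integration.integral_cong) simp_all
  also have "\<dots> = 1 - pmf (p x) t - (\<integral>y. (if y = t then 0 else G y) \<partial>p x)"
  proof -
    have "(\<integral>y. 1 - indicator {t} y \<partial>p x) = 1 - pmf (p x) t"
      by (subst Bochner_Integration.integral_diff)
        (auto simp: measure_pmf_single intro!: integrable_measure_pmf_bounded[where B=1])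
    with int show ?thesis
      by (subst Bochner_Integration.integral_diff)
        (auto intro!: integrable_measure_pmf_bounded[where B=1])
  qed
  also have "\<dots> = 1 - (\<Sum>n<Suc (Suc m). first_passage p t n x)"
    unfolding sum_first_passage_Suc G_def by simp
  finally show ?case .
qed simp

section \<open>Return times with finite mean\<close>

lemma sum_lessThan_mult_div:
  fixes f :: "nat \<Rightarrow> real"
  assumes "N > 0"
  shows "(\<Sum>j<K * N. f (j div N)) = real N * (\<Sum>m<K. f m)"
proof -
  have "(\<Sum>j<K * N. f (j div N)) = (\<Sum>m<K. \<Sum>j\<in>{m * N..<m * N + N}. f (j div N))"
    by (rule sum.nat_group[symmetric])
  also have "\<dots> = (\<Sum>m<K. \<Sum>j\<in>{m * N..<m * N + N}. f m)"
  proof (intro sum.cong refl)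
    fix m j assume "j \<in> {m * N..<m * N + N}"
    with assms have "j div N = m"
      by (intro div_nat_eqI) (auto simp: algebra_simps)
    then show "f (j div N) = f m" by simp
  qed
  finally show ?thesis by (simp add: sum_distrib_left)
qed

locale finite_mean_distribution =
  fixes F :: "nat \<Rightarrow> real"
  assumes nonneg: "\<And>n. 0 \<le> F n"
    and at_0: "F 0 = 0"
    and summable: "summable F"
    and suminf_eq_1: "(\<Sum>n. F n) = 1"
    and summable_mean: "summable (\<lambda>n. real n * F n)"
begin

definition tail :: "nat \<Rightarrow> real" where
  "tail m = 1 - (\<Sum>n<Suc m. F n)"

lemma tail_eq_suminf: "tail m = (\<Sum>k. F (k + Suc m))"
  using suminf_split_initial_segment[OF summable, of "Suc m"] suminf_eq_1 unfolding tail_def by simp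

lemma tail_nonneg: "0 \<le> tail m"
  unfolding tail_eq_suminf
  by (rule suminf_nonneg) (use summable_ignore_initial_segment[OF summable, of "Suc m"] nonneg in auto)

lemma tail_LIMSEQ_0: "tail \<longlonglongrightarrow> 0"
proof -
  have "(\<lambda>m. \<Sum>n<Suc m. F n) \<longlonglongrightarrow> 1"
    using LIMSEQ_Suc[OF summable_LIMSEQ[OF summable]] suminf_eq_1 by simp
  then have "(\<lambda>m. 1 - (\<Sum>n<Suc m. F n)) \<longlonglongrightarrow> 1 - 1"
    by (intro tendsto_diff tendsto_const)
  then show ?thesis unfolding tail_def by simp
qed

lemma sum_tail: "(\<Sum>m<K. tail m) = (\<Sum>n<Suc K. real n * F n) + real K * tail K"
proof (induction K)
  case (Suc K)
  have "tail K = tail (Suc K) + F (Suc K)" unfolding tail_def by simp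
  with Suc show ?case by (simp add: algebra_simps)
qed (simp add: at_0)

text \<open>The tails sum to the mean; only the upper bound is needed.\<close>
lemma sum_tail_le_mean: "(\<Sum>m<K. tail m) \<le> (\<Sum>n. real n * F n)"
proof -
  have "real K * tail K = (\<Sum>k. real K * F (k + Suc K))"
    unfolding tail_eq_suminf
    by (rule suminf_mult[symmetric]) (rule summable_ignore_initial_segment[OF summable])
  also have "\<dots> \<le> (\<Sum>k. real (k + Suc K) * F (k + Suc K))"
    using summable_ignore_initial_segment[OF summable_mean, of "Suc K"]
    by (intro suminf_le mult_right_mono nonneg summable_mult
          summable_ignore_initial_segment[OF summable]) simp_all
  also have "\<dots> = (\<Sum>n. real n * F n) - (\<Sum>n<Suc K. real n * F n)"
    using suminf_split_initial_segment[OF summable_mean, of "Suc K"] by simp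
  finally show ?thesis using sum_tail[of K] by linarith
qed

lemma summable_tail_div:
  assumes "N > 0"
  shows "summable (\<lambda>j. tail (j div N))"
proof (rule summableI_nonneg_bounded[where x = "real N * (\<Sum>n. real n * F n)"])
  fix K
  have "(\<Sum>j<K. tail (j div N)) \<le> (\<Sum>j<K * N. tail (j div N))"
    by (rule sum_mono2) (use assms in \<open>auto intro: tail_nonneg\<close>)
  also have "\<dots> = real N * (\<Sum>m<K. tail m)"
    by (rule sum_lessThan_mult_div[OF assms])
  also have "\<dots> \<le> real N * (\<Sum>n. real n * F n)"
    by (intro mult_left_mono sum_tail_le_mean) simp
  finally show "(\<Sum>j<K. tail (j div N)) \<le> real N * (\<Sum>n. real n * F n)" .
qed (rule tail_nonneg)

end

lemma finite_mean_distribution_first_passage: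
  assumes "positive_recurrent p s"
  shows "finite_mean_distribution (\<lambda>n. first_passage p s n s)"
  using assms unfolding positive_recurrent_def
  by unfold_locales (auto simp: first_passage_bounds)

section \<open>Markov chains with a fixed initial state\<close>

lemma ball_atLeastAtMost_1_iff: "(\<forall>i\<in>{1..m}. P i) \<longleftrightarrow> (\<forall>i<m. P (Suc i))"
proof
  assume "\<forall>i\<in>{1..m}. P i"
  then show "\<forall>i<m. P (Suc i)" by simp
next
  assume P: "\<forall>i<m. P (Suc i)"
  show "\<forall>i\<in>{1..m}. P i"
  proof
    fix i assume "i \<in> {1..m}"
    then obtain i' where "i = Suc i'" "i' < m" by (cases i) auto
    with P show "P i" by simp
  qed
qed

locale markov_chain_from = prob_space M for M :: "'w measure" +
  fixes Z :: "'w \<Rightarrow> nat \<Rightarrow> 's" and p :: "'s \<Rightarrow> 's pmf" and s0 :: 's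
  assumes markov: "markov_chain_with M Z p"
    and start: "\<And>w. Z w 0 = s0"
    and measurable_states: "\<And>k. (\<lambda>w. map (Z w) [1..<Suc k]) \<in> M \<rightarrow>\<^sub>M count_space UNIV"
begin

definition trajectory :: "nat \<Rightarrow> 'w \<Rightarrow> 's list" where
  "trajectory k w = map (Z w) [1..<Suc k]"

lemma measurable_trajectory: "trajectory k \<in> M \<rightarrow>\<^sub>M count_space UNIV"
  using measurable_states unfolding trajectory_def[abs_def] .

lemma sets_trajectory: "{w\<in>space M. trajectory k w \<in> A} \<in> sets M"
proof -
  have "trajectory k -` A \<inter> space M = {w\<in>space M. trajectory k w \<in> A}" by blast
  then show ?thesis using measurable_sets[OF measurable_trajectory[of k], of A] by simp
qed

lemma sets_trajectory_eq: "{w\<in>space M. trajectory k w = ys} \<in> sets M"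
  using sets_trajectory[of k "{ys}"] by simp

lemma length_trajectory [simp]: "length (trajectory k w) = k"
  by (simp add: trajectory_def)

lemma nth_trajectory: "i < k \<Longrightarrow> trajectory k w ! i = Z w (Suc i)"
  by (simp add: trajectory_def del: upt_Suc)

lemma trajectory_0 [simp]: "trajectory 0 w = []"
  by (simp add: trajectory_def)

lemma trajectory_Suc: "trajectory (Suc k) w = trajectory k w @ [Z w (Suc k)]"
  by (simp add: trajectory_def)

lemma take_trajectory: "j \<le> k \<Longrightarrow> take j (trajectory k w) = trajectory j w"
  by (simp add: trajectory_def take_map del: upt_Suc)

lemma last_trajectory: "last (s0 # trajectory j w) = Z w j"
  by (cases j) (simp_all add: trajectory_Suc start)

lemma trajectory_eq_iff:
  assumes "length ys = k"
  shows "trajectory k w = ys \<longleftrightarrow> (\<forall>i\<le>k. Z w i = (s0 # ys) ! i)"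
proof -
  have "trajectory k w = ys \<longleftrightarrow> (\<forall>i<k. Z w (Suc i) = ys ! i)"
    using assms by (auto simp: trajectory_def list_eq_iff_nth_eq simp del: upt_Suc)
  also have "\<dots> \<longleftrightarrow> (\<forall>i<Suc k. Z w i = (s0 # ys) ! i)"
    unfolding All_less_Suc2 by (simp add: start)
  finally show ?thesis by (simp add: less_Suc_eq_le)
qed

lemma trajectory_Suc_eq_snoc_iff:
  "trajectory (Suc k) w = xs @ [y] \<longleftrightarrow> trajectory k w = xs \<and> Z w (Suc k) = y"
  by (simp add: trajectory_Suc)

lemma prob_trajectory_eq: "prob {w\<in>space M. trajectory k w = ys} = pmf (walk p k s0) ys"
proof (induction k arbitrary: ys)
  case 0
  have "{w\<in>space M. trajectory 0 w = ys} = (if ys = [] then space M else {})"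
    by (auto simp: trajectory_def)
  then show ?case
    by (simp add: prob_space)
next
  case (Suc k)
  show ?case
  proof (cases "length ys = Suc k")
    case False
    have "ys \<notin> set_pmf (walk p (Suc k) s0)"
    proof
      assume "ys \<in> set_pmf (walk p (Suc k) s0)"
      with False show False by (auto dest: length_walk)
    qed
    then have "pmf (walk p (Suc k) s0) ys = 0"
      by (simp only: set_pmf_iff not_not)
    moreover have "{w\<in>space M. trajectory (Suc k) w = ys} = {}"
      using False by (auto simp: trajectory_def)
    ultimately show ?thesis by (simp only: measure_empty)
  next
    case True
    then obtain xs y where ys: "ys = xs @ [y]" and xs: "length xs = k"
      by (cases ys rule: rev_cases) auto
    have history: "{w\<in>space M. trajectory k w = xs} = {w\<in>space M. \<forall>i\<le>k. Z w i = (s0 # xs) ! i}"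
      using trajectory_eq_iff[OF xs] by blast
    have "prob {w\<in>space M. trajectory (Suc k) w = ys}
        = prob {w\<in>space M. (\<forall>i\<le>k. Z w i = (s0 # xs) ! i) \<and> Z w (Suc k) = y}"
      by (simp only: ys trajectory_Suc_eq_snoc_iff trajectory_eq_iff[OF xs])
    also have "\<dots> = prob {w\<in>space M. \<forall>i\<le>k. Z w i = (s0 # xs) ! i} * pmf (p (last (s0 # xs))) y"
      using markov[unfolded markov_chain_with_def, rule_format, of "s0 # xs" k y] xs by simp
    also have "\<dots> = prob {w\<in>space M. trajectory k w = xs} * pmf (p (last (s0 # xs))) y"
      by (simp only: history)
    also have "\<dots> = pmf (walk p (Suc k) s0) ys"
      by (simp only: Suc.IH ys pmf_walk_snoc)
    finally show ?thesis .
  qed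
qed

lemma distr_trajectory: "distr M (count_space UNIV) (trajectory k) = measure_pmf (walk p k s0)"
proof -
  let ?\<Omega> = "set_pmf (walk p k s0)"
  have "{w\<in>space M. trajectory k w \<in> ?\<Omega>} = (\<Union>ys\<in>?\<Omega>. {w\<in>space M. trajectory k w = ys})"
    by blast
  then have "emeasure M {w\<in>space M. trajectory k w \<in> ?\<Omega>}
      = (\<integral>\<^sup>+ys. emeasure M {w\<in>space M. trajectory k w = ys} \<partial>count_space ?\<Omega>)"
    by (simp only:) (rule emeasure_UN_countable, auto simp: disjoint_family_on_def sets_trajectory_eq)
  also have "\<dots> = (\<integral>\<^sup>+ys. emeasure (walk p k s0) {ys} \<partial>count_space ?\<Omega>)"
    by (intro nn_integral_cong) (simp add: emeasure_eq_measure prob_trajectory_eq emeasure_pmf_single)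
  also have "\<dots> = emeasure (walk p k s0) ?\<Omega>"
    by (rule emeasure_countable_singleton[symmetric]) auto
  finally have "prob {w\<in>space M. trajectory k w \<in> ?\<Omega>} = 1"
    by (simp add: emeasure_eq_measure emeasure_pmf)
  then have "AE w in M. w \<in> {w\<in>space M. trajectory k w \<in> ?\<Omega>}"
    by (subst AE_in_set_eq_1[OF sets_trajectory])
  then have full: "AE w in M. trajectory k w \<in> ?\<Omega>"
    by eventually_elim simp
  show ?thesis
  proof (rule measure_eqI_countable_AE[where \<Omega> = ?\<Omega>])
    show "AE ys in distr M (count_space UNIV) (trajectory k). ys \<in> ?\<Omega>"
      using full by (subst AE_distr_iff[OF measurable_trajectory]) simp_all
    show "AE ys in walk p k s0. ys \<in> ?\<Omega>"
      by (rule AE_measure_pmf)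
    fix ys
    have "trajectory k -` {ys} \<inter> space M = {w\<in>space M. trajectory k w = ys}" by auto
    then show "emeasure (distr M (count_space UNIV) (trajectory k)) {ys} = emeasure (walk p k s0) {ys}"
      by (simp add: emeasure_distr[OF measurable_trajectory] emeasure_eq_measure
          prob_trajectory_eq emeasure_pmf_single)
  qed simp_all
qed

lemma prob_trajectory_in: "prob {w\<in>space M. trajectory k w \<in> A} = measure_pmf.prob (walk p k s0) A"
proof -
  have "trajectory k -` A \<inter> space M = {w\<in>space M. trajectory k w \<in> A}" by blast
  then show ?thesis
    using measure_distr[OF measurable_trajectory[of k], of A] by (simp add: distr_trajectory)
qed


definition no_return :: "nat \<Rightarrow> nat \<Rightarrow> 'w set" where
  "no_return j m = {w\<in>space M. Z w j = s0 \<and> (\<forall>i\<in>{1..m}. Z w (j + i) \<noteq> s0)}"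

lemma no_return_eq_trajectory:
  "no_return j m = {w\<in>space M. trajectory (j + m) w
     \<in> {zs. last (s0 # take j zs) = s0 \<and> drop j zs \<in> {zs. \<forall>i<m. zs ! i \<noteq> s0}}}"
proof (rule set_eqI)
  fix w
  have "last (s0 # take j (trajectory (j + m) w)) = Z w j"
    by (simp only: take_trajectory[OF le_add1] last_trajectory)
  moreover have "(\<forall>i<m. drop j (trajectory (j + m) w) ! i \<noteq> s0) \<longleftrightarrow> (\<forall>i<m. Z w (j + Suc i) \<noteq> s0)"
    by (simp add: nth_trajectory)
  ultimately show "w \<in> no_return j m \<longleftrightarrow> w \<in> {w\<in>space M. trajectory (j + m) w
     \<in> {zs. last (s0 # take j zs) = s0 \<and> drop j zs \<in> {zs. \<forall>i<m. zs ! i \<noteq> s0}}}"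
    unfolding no_return_def ball_atLeastAtMost_1_iff mem_Collect_eq by (simp only:)
qed

lemma sets_no_return: "no_return j m \<in> sets M"
  unfolding no_return_eq_trajectory by (rule sets_trajectory)

lemma prob_no_return_le: "prob (no_return j m) \<le> 1 - (\<Sum>n<Suc m. first_passage p s0 n s0)"
  using prob_walk_shift_le[of p j m s0 s0 "{zs. \<forall>i<m. zs ! i \<noteq> s0}"]
  unfolding no_return_eq_trajectory prob_trajectory_in prob_walk_avoids .

context
  assumes recurrent: "positive_recurrent p s0"
begin

interpretation return_time: finite_mean_distribution "\<lambda>n. first_passage p s0 n s0"
  by (rule finite_mean_distribution_first_passage[OF recurrent])

lemma prob_no_return_le_tail: "prob (no_return j m) \<le> return_time.tail m"
  unfolding return_time.tail_def by (rule prob_no_return_le)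

lemma AE_return: "AE w in M. \<forall>j. Z w j = s0 \<longrightarrow> (\<exists>i>0. Z w (j + i) = s0)"
proof (subst AE_all_countable, intro allI)
  fix j
  have sets: "(\<Inter>m. no_return j m) \<in> sets M"
    by (intro sets.countable_INT) (auto intro: sets_no_return)
  have "prob (\<Inter>m. no_return j m) \<le> return_time.tail m" for m
    by (rule order_trans[OF finite_measure_mono prob_no_return_le_tail]) (auto intro: sets_no_return)
  then have "prob (\<Inter>m. no_return j m) \<le> 0"
    by (intro LIMSEQ_le_const[OF return_time.tail_LIMSEQ_0]) auto
  then have "AE w in M. w \<notin> (\<Inter>m. no_return j m)"
    using prob_eq_0[OF sets] measure_nonneg[of M "\<Inter>m. no_return j m"] by simp
  with AE_space show "AE w in M. Z w j = s0 \<longrightarrow> (\<exists>i>0. Z w (j + i) = s0)"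
  proof eventually_elim
    case (elim w)
    then obtain m where m: "w \<notin> no_return j m" and w: "w \<in> space M" by blast
    show ?case
    proof
      assume "Z w j = s0"
      with m w obtain i where "i \<in> {1..m}" "Z w (j + i) = s0" by (auto simp: no_return_def)
      then show "\<exists>i>0. Z w (j + i) = s0" by (intro exI[of _ i]) auto
    qed
  qed
qed

text \<open>Borel--Cantelli: by the finite mean return time, the probabilities that an excursion
  starts at time \<open>j\<close> and lasts longer than \<open>j / N\<close> are summable.\<close>
lemma AE_eventually_short_excursions:
  "AE w in M. \<forall>N>0. \<exists>J. \<forall>j\<ge>J. Z w j = s0 \<longrightarrow> (\<exists>i\<in>{1..j div N}. Z w (j + i) = s0)"
proof (subst AE_all_countable, intro allI)
  fix N :: nat
  show "AE w in M. N > 0 \<longrightarrow> (\<exists>J. \<forall>j\<ge>J. Z w j = s0 \<longrightarrow> (\<exists>i\<in>{1..j div N}. Z w (j + i) = s0))"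
  proof (cases "N > 0")
    case True
    have "summable (\<lambda>j. prob (no_return j (j div N)))"
      by (rule summable_comparison_test[OF _ return_time.summable_tail_div[OF True]])
        (auto intro: prob_no_return_le_tail)
    then have "AE w in M. eventually (\<lambda>j. w \<in> space M - no_return j (j div N)) sequentially"
      by (intro borel_cantelli_AE1 sets_no_return) (simp_all add: less_top[symmetric])
    then show ?thesis
      by (rule eventually_mono) (auto simp: eventually_sequentially no_return_def)
  qed simp
qed

end

end

section \<open>Excursions\<close>

lemma exists_visit_ge:
  fixes n :: nat
  assumes "z 0 = s" and returns: "\<And>j. z j = s \<Longrightarrow> \<exists>i>0. z (j + i) = s"
  shows "\<exists>j\<ge>n. z j = s"
proof (induction n)
  case (Suc n)
  then obtain j where "n \<le> j" "z j = s" by blast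
  moreover obtain i where "i > 0" "z (j + i) = s" using returns \<open>z j = s\<close> by blast
  ultimately show ?case by (intro exI[of _ "j + i"]) simp
qed (use assms in blast)

text \<open>\<open>d\<close> vanishes at each visit to \<open>s\<close> and grows by at most \<open>q\<close> per step, so \<open>d k\<close> is at
  most \<open>q\<close> times the time elapsed since the last visit before \<open>k\<close>, which is eventually at
  most \<open>k / N\<close>.\<close>
lemma eventually_le_of_short_excursions:
  fixes z :: "nat \<Rightarrow> 's" and d :: "nat \<Rightarrow> real"
  assumes visits: "\<And>n. \<exists>j\<ge>n. z j = s"
    and short: "\<And>j. J \<le> j \<Longrightarrow> z j = s \<Longrightarrow> \<exists>i\<in>{1..j div N}. z (j + i) = s"
    and reset: "\<And>j. z j = s \<Longrightarrow> d j = 0"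
    and growth: "\<And>j i. d (j + i) \<le> d j + real i * q"
    and q: "0 \<le> q" and N: "N > 0"
  shows "eventually (\<lambda>k. d k \<le> real k * q / real N) sequentially"
proof -
  obtain j0 where j0: "J \<le> j0" "z j0 = s" using visits by blast
  have "d k \<le> real k * q / real N" if "j0 \<le> k" for k
  proof -
    define j where "j = (GREATEST j. j \<le> k \<and> z j = s)"
    have j: "j \<le> k" "z j = s"
      using GreatestI_nat[of "\<lambda>j. j \<le> k \<and> z j = s" j0 k] j0 that by (auto simp: j_def)
    have last: "j' \<le> j" if "j' \<le> k" "z j' = s" for j'
      using Greatest_le_nat[of "\<lambda>j. j \<le> k \<and> z j = s" j' k] that by (simp add: j_def)
    have "J \<le> j" using last[OF that j0(2)] j0(1) by linarith
    then obtain i where i: "i \<in> {1..j div N}" "z (j + i) = s"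
      using short j(2) by blast
    have "k < j + i"
    proof (rule ccontr)
      assume "\<not> k < j + i"
      then have "j + i \<le> j" by (intro last i(2)) simp
      with i(1) show False by simp
    qed
    then have "k - j \<le> j div N" using i(1) by auto
    then have "(k - j) * N \<le> j" using N by (simp add: less_eq_div_iff_mult_less_eq)
    then have "(k - j) * N \<le> k" using j(1) by linarith
    then have "real (k - j) * real N \<le> real k"
      by (simp only: of_nat_mult[symmetric] of_nat_le_iff)
    then have "real (k - j) * real N * q \<le> real k * q"
      using q by (rule mult_right_mono)
    then have "real (k - j) * q \<le> real k * q / real N"
      using N by (simp add: field_simps)
    moreover have "d k \<le> real (k - j) * q"
      using growth[of j "k - j"] reset[OF j(2)] j(1) by simp
    ultimately show ?thesis by linarith
  qed
  then show ?thesis unfolding eventually_sequentially by blast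
qed

lemma liminf_frame_average_ge:
  fixes f :: "nat \<Rightarrow> real"
  assumes T: "T > 0" and mono: "mono f" and nonneg: "\<And>t. 0 \<le> f t"
    and frames: "\<And>c. c < q \<Longrightarrow> eventually (\<lambda>k. c * (real k + 1) \<le> f (k * T)) sequentially"
  shows "ereal q \<le> liminf (\<lambda>t. ereal (f t / (real t / real T)))"
  unfolding le_Liminf_iff
proof (intro allI impI)
  fix y assume "y < ereal q"
  then obtain c where c: "y < ereal c" "c < q" using ereal_dense2 by force
  obtain K where K: "\<And>k. K \<le> k \<Longrightarrow> c * (real k + 1) \<le> f (k * T)"
    using frames[OF c(2)] unfolding eventually_sequentially by blast
  have "c \<le> f t / (real t / real T)" if t: "Suc K * T \<le> t" for t
  proof -
    define k where "k = t div T"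
    define s where "s = real t / real T"
    have "Suc K \<le> k" unfolding k_def using t T by (simp add: less_eq_div_iff_mult_less_eq)
    have "t = k * T + t mod T" by (simp add: k_def)
    then have "real t = real k * real T + real (t mod T)"
      by (metis of_nat_add of_nat_mult)
    moreover have "real (t mod T) < real T" using T by simp
    ultimately have k_s: "real k \<le> s" "s < real k + 1"
      using T by (simp_all add: s_def field_simps)
    have "0 < s" using k_s(1) \<open>Suc K \<le> k\<close> by linarith
    show ?thesis
    proof (cases "0 \<le> c")
      case True
      have "c * s \<le> c * (real k + 1)"
        using mult_left_mono[OF less_imp_le[OF k_s(2)] True] .
      also have "\<dots> \<le> f (k * T)" using K \<open>Suc K \<le> k\<close> by simp
      also have "\<dots> \<le> f t" using mono by (rule monoD) (simp add: k_def div_times_less_eq_dividend)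
      finally show ?thesis using \<open>0 < s\<close> by (simp add: s_def[symmetric] pos_le_divide_eq)
    next
      case False
      have "0 \<le> f t / s" using nonneg[of t] \<open>0 < s\<close> by simp
      with False show ?thesis by (simp only: s_def)
    qed
  qed
  then have "eventually (\<lambda>t. ereal c \<le> ereal (f t / (real t / real T))) sequentially"
    unfolding eventually_sequentially by auto
  then show "eventually (\<lambda>t. y < ereal (f t / (real t / real T))) sequentially"
    by eventually_elim (rule less_le_trans[OF c(1)], simp)
qed

section \<open>Rewards and debts\<close>

lemma exec_count_between:
  assumes "tau X > 0" "sg t = Some X"
  shows "1 \<le> exec_count tau sg X t \<and> exec_count tau sg X t \<le> tau X"
proof -
  let ?A = "{u. (t div tau X) * tau X \<le> u \<and> u \<le> t \<and> sg u = Some X}"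
  have sub: "?A \<subseteq> {(t div tau X) * tau X..t}" by auto
  have "t \<in> ?A" using assms by (auto simp: div_times_less_eq_dividend)
  moreover have "finite ?A" by (rule finite_subset[OF sub]) simp
  ultimately have "1 \<le> card ?A" by (auto simp: Suc_le_eq card_gt_0_iff)
  moreover have "card ?A \<le> t mod tau X + 1"
    using card_mono[OF _ sub]
    by (simp add: minus_div_mult_eq_mod [symmetric] Suc_diff_le div_times_less_eq_dividend)
  moreover have "t mod tau X < tau X" using assms by simp
  ultimately show ?thesis unfolding exec_count_def by linarith
qed

lemma frame_len_pos:
  assumes "finite S" "\<forall>X\<in>S. tau X > 0"
  shows "frame_len S tau > 0"
proof -
  have "0 \<notin> tau ` S" using assms(2) by auto
  then have "Lcm (tau ` S) \<noteq> 0" using Lcm_0_iff[OF finite_imageI[OF assms(1), of tau]] by simp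
  then show ?thesis by (simp add: frame_len_def)
qed

lemma debt_nonneg: "0 \<le> debt S tau r qs sg X k"
  by (cases k) simp_all

context
  fixes tau :: "'x \<Rightarrow> nat" and r :: "'x \<Rightarrow> nat \<Rightarrow> real" and X :: 'x
  assumes tau_pos: "tau X > 0" and rewards_nonneg: "\<forall>i\<in>{1..tau X}. 0 \<le> r X i"
begin

lemma slot_reward_nonneg: "0 \<le> slot_reward tau r sg X t"
  using exec_count_between[of tau X sg t, OF tau_pos] rewards_nonneg unfolding slot_reward_def by auto

lemma cum_reward_nonneg: "0 \<le> cum_reward tau r sg X t"
  unfolding cum_reward_def by (rule sum_nonneg) (rule slot_reward_nonneg)

lemma mono_cum_reward: "mono (cum_reward tau r sg X)"
  unfolding mono_def cum_reward_def by (auto intro: sum_mono2 slot_reward_nonneg)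

lemma frame_reward_nonneg: "0 \<le> frame_reward S tau r sg X k"
  unfolding frame_reward_def by (rule sum_nonneg) (rule slot_reward_nonneg)

lemma cum_reward_frames:
  "cum_reward tau r sg X (k * frame_len S tau) = (\<Sum>i=1..k. frame_reward S tau r sg X i)"
proof (induction k)
  case (Suc k)
  let ?T = "frame_len S tau"
  have "cum_reward tau r sg X (Suc k * ?T)
      = cum_reward tau r sg X (k * ?T) + (\<Sum>u\<in>{k * ?T..<Suc k * ?T}. slot_reward tau r sg X u)"
    unfolding cum_reward_def atLeast0LessThan[symmetric]
    by (rule sum.atLeastLessThan_concat[symmetric]) auto
  with Suc show ?case by (simp add: frame_reward_def)
qed (simp add: cum_reward_def)

lemma debt_add_le:
  assumes "0 \<le> qs X"
  shows "debt S tau r qs sg X (j + i) \<le> debt S tau r qs sg X j + real i * qs X"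
proof (induction i)
  case (Suc i)
  have "debt S tau r qs sg X (Suc (j + i)) \<le> max 0 (debt S tau r qs sg X (j + i) + qs X)"
    using frame_reward_nonneg[of S sg "Suc (j + i)"] by simp
  moreover have "0 \<le> debt S tau r qs sg X j + real (Suc i) * qs X"
    using debt_nonneg[of S tau r qs sg X j] assms by simp
  ultimately show ?case using Suc by (auto simp: algebra_simps)
qed simp

end


lemma sum_frame_reward_ge:
  "real k * qs X - debt S tau r qs sg X k \<le> (\<Sum>i=1..k. frame_reward S tau r sg X i)"
proof (induction k)
  case (Suc k)
  have "debt S tau r qs sg X k + qs X - frame_reward S tau r sg X (Suc k) \<le> debt S tau r qs sg X (Suc k)"
    by simp
  with Suc show ?case by (simp add: algebra_simps)
qed simp

lemma avg_reward_ge_of_sublinear_debt: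
  assumes tau_pos: "tau X > 0" and rewards_nonneg: "\<forall>i\<in>{1..tau X}. 0 \<le> r X i"
    and T: "frame_len S tau > 0" and q: "qs X > 0"
    and sublinear: "\<And>N. N > 0 \<Longrightarrow>
      eventually (\<lambda>k. debt S tau r qs sg X k \<le> real k * qs X / real N) sequentially"
  shows "ereal (qs X) \<le> avg_reward S tau r sg X"
  unfolding avg_reward_def
proof (rule liminf_frame_average_ge[OF T mono_cum_reward cum_reward_nonneg])
  fix c assume "c < qs X"
  define \<delta> where "\<delta> = (qs X - c) / 2"
  have \<delta>: "0 < \<delta>" using \<open>c < qs X\<close> by (simp add: \<delta>_def)
  obtain N :: nat where N: "qs X / \<delta> < real N" using reals_Archimedean2 by blast
  moreover have "0 < qs X / \<delta>" using q \<delta> by simp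
  ultimately have "N > 0" by simp
  have "qs X / real N < \<delta>" using N q \<delta> \<open>N > 0\<close> by (simp add: field_simps)
  obtain K :: nat where K: "c / \<delta> < real K" using reals_Archimedean2 by blast
  show "eventually (\<lambda>k. c * (real k + 1) \<le> cum_reward tau r sg X (k * frame_len S tau)) sequentially"
    using sublinear[OF \<open>N > 0\<close>] eventually_ge_at_top[of K]
  proof eventually_elim
    case (elim k)
    have "c < real K * \<delta>" using K \<delta> by (simp add: divide_less_eq)
    also have "\<dots> \<le> real k * \<delta>" using elim(2) \<delta> by (simp add: mult_right_mono)
    finally have "c \<le> real k * \<delta>" by simp
    moreover have "real k * (qs X / real N) \<le> real k * \<delta>"
      by (rule mult_left_mono) (use \<open>qs X / real N < \<delta>\<close> in simp_all)
    moreover have "real k * qs X = real k * c + 2 * (real k * \<delta>)"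
      by (simp add: \<delta>_def field_simps)
    moreover have "c * (real k + 1) = real k * c + c"
      by (simp add: algebra_simps)
    ultimately have "c * (real k + 1) \<le> real k * qs X - real k * (qs X / real N)"
      by linarith
    also have "\<dots> \<le> real k * qs X - debt S tau r qs sg X k"
      using elim(1) by simp
    also have "\<dots> \<le> cum_reward tau r sg X (k * frame_len S tau)"
      using sum_frame_reward_ge cum_reward_frames[where tau=tau and X=X and r=r, OF tau_pos rewards_nonneg] by simp
    finally show ?case .
  qed
qed (use tau_pos rewards_nonneg in simp_all)

lemma avg_reward_ge_of_recurrent_debts:
  assumes X: "X \<in> S" and tau_pos: "tau X > 0" and rewards_nonneg: "\<forall>i\<in>{1..tau X}. 0 \<le> r X i"
    and T: "frame_len S tau > 0" and q: "qs X > 0"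
    and returns: "\<forall>j. sys_state S tau r qs sg j = (\<lambda>X\<in>S. 0) \<longrightarrow>
      (\<exists>i>0. sys_state S tau r qs sg (j + i) = (\<lambda>X\<in>S. 0))"
    and short: "\<forall>N>0. \<exists>J. \<forall>j\<ge>J. sys_state S tau r qs sg j = (\<lambda>X\<in>S. 0) \<longrightarrow>
      (\<exists>i\<in>{1..j div N}. sys_state S tau r qs sg (j + i) = (\<lambda>X\<in>S. 0))"
  shows "ereal (qs X) \<le> avg_reward S tau r sg X"
proof (rule avg_reward_ge_of_sublinear_debt[where X=X and tau=tau and r=r and qs=qs and S=S, OF tau_pos rewards_nonneg T q])
  fix N :: nat assume "N > 0"
  with short obtain J where J: "\<forall>j\<ge>J. sys_state S tau r qs sg j = (\<lambda>X\<in>S. 0) \<longrightarrow>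
      (\<exists>i\<in>{1..j div N}. sys_state S tau r qs sg (j + i) = (\<lambda>X\<in>S. 0))" by blast
  have start: "sys_state S tau r qs sg 0 = (\<lambda>X\<in>S. 0)"
    by (simp add: sys_state_def)
  show "eventually (\<lambda>k. debt S tau r qs sg X k \<le> real k * qs X / real N) sequentially"
  proof (rule eventually_le_of_short_excursions[where J=J])
    show "\<exists>j\<ge>n. sys_state S tau r qs sg j = (\<lambda>X\<in>S. 0)" for n
      using exists_visit_ge[of "sys_state S tau r qs sg", OF start] returns by blast
    show "debt S tau r qs sg X j = 0" if "sys_state S tau r qs sg j = (\<lambda>X\<in>S. 0)" for j
      using fun_cong[OF that, of X] X by (simp add: sys_state_def)
    show "debt S tau r qs sg X (j + i) \<le> debt S tau r qs sg X j + real i * qs X" for j i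
      using debt_add_le[where tau=tau and X=X and r=r, OF tau_pos rewards_nonneg] q by simp
  qed (use J \<open>N > 0\<close> q in simp_all)
qed

section \<open>The debt process\<close>

lemma slot_reward_prefix_eq:
  assumes "\<forall>v\<le>u. sg v = sg' v"
  shows "slot_reward tau r sg X u = slot_reward tau r sg' X u"
proof -
  have "{v. (u div tau X) * tau X \<le> v \<and> v \<le> u \<and> sg v = Some X} =
        {v. (u div tau X) * tau X \<le> v \<and> v \<le> u \<and> sg' v = Some X}"
    using assms by auto
  then show ?thesis using assms unfolding slot_reward_def exec_count_def by simp
qed

lemma debt_prefix_eq:
  assumes "\<forall>u<k * frame_len S tau. sg u = sg' u"
  shows "debt S tau r qs sg X k = debt S tau r qs sg' X k"
  using assms
proof (induction k)
  case (Suc k)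
  let ?T = "frame_len S tau"
  have "frame_reward S tau r sg X (Suc k) = frame_reward S tau r sg' X (Suc k)"
    unfolding frame_reward_def
  proof (rule sum.cong[OF refl])
    fix u assume "u \<in> {(Suc k - 1) * ?T..<Suc k * ?T}"
    then have "\<forall>v\<le>u. sg v = sg' v" using Suc.prems by auto
    then show "slot_reward tau r sg X u = slot_reward tau r sg' X u" by (rule slot_reward_prefix_eq)
  qed
  moreover have "k * ?T \<le> Suc k * ?T" by simp
  then have "\<forall>u<k * ?T. sg u = sg' u" using Suc.prems by auto
  ultimately show ?case using Suc.IH by simp
qed simp

lemma sys_state_prefix_eq:
  assumes "\<forall>u<n. sg u = sg' u" "k * frame_len S tau \<le> n"
  shows "sys_state S tau r qs sg k = sys_state S tau r qs sg' k"
  unfolding sys_state_def using assms by (intro restrict_ext debt_prefix_eq) auto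

lemma sets_schedule_prefix:
  fixes sched :: "'w \<Rightarrow> nat \<Rightarrow> 'x option"
  assumes "\<forall>t a. {w\<in>space M. sched w t = a} \<in> sets M"
  shows "{w\<in>space M. \<forall>u<n. sched w u = g u} \<in> sets M"
proof (induction n)
  case (Suc n)
  have eq: "{w\<in>space M. \<forall>u<Suc n. sched w u = g u} =
        {w\<in>space M. \<forall>u<n. sched w u = g u} \<inter> {w\<in>space M. sched w n = g n}"
    by (auto simp: less_Suc_eq)
  have "{w\<in>space M. sched w n = g n} \<in> sets M" using assms by blast
  with Suc show ?case unfolding eq by (rule sets.Int)
qed simp

text \<open>A function of the schedule that only depends on its first \<open>n\<close> slots takes each value on a
  finite union of cylinder events, since a schedule takes values in the finite set \<open>S\<close>.\<close>

lemma sets_prefix_determined: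
  fixes sched :: "'w \<Rightarrow> nat \<Rightarrow> 'x option"
  assumes vals: "\<forall>w\<in>space M. \<forall>t. set_option (sched w t) \<subseteq> S" and "finite S"
    and events: "\<forall>t a. {w\<in>space M. sched w t = a} \<in> sets M"
    and prefix: "\<And>sg sg'. \<forall>u<n. sg u = sg' u \<Longrightarrow> G sg = G sg'"
  shows "{w\<in>space M. G (sched w) \<in> A} \<in> sets M"
proof -
  define V where "V = insert None (Some ` S)"
  define ext where "ext g = (\<lambda>u. if u < n then g u else None)" for g :: "nat \<Rightarrow> 'x option"
  define Gs where "Gs = {g \<in> {..<n} \<rightarrow>\<^sub>E V. G (ext g) \<in> A}"
  have "finite Gs" unfolding Gs_def V_def
    by (rule finite_subset[of _ "{..<n} \<rightarrow>\<^sub>E insert None (Some ` S)"])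
      (auto intro!: finite_PiE simp: \<open>finite S\<close>)
  moreover have "{w\<in>space M. G (sched w) \<in> A} = (\<Union>g\<in>Gs. {w\<in>space M. \<forall>u<n. sched w u = g u})"
  proof (intro equalityI subsetI)
    fix w assume w: "w \<in> {w\<in>space M. G (sched w) \<in> A}"
    define g where "g = restrict (sched w) {..<n}"
    have "sched w u \<in> V" for u
      using vals w by (cases "sched w u") (auto simp: V_def)
    then have "g \<in> {..<n} \<rightarrow>\<^sub>E V" unfolding g_def by auto
    moreover have "G (ext g) = G (sched w)" by (rule prefix) (auto simp: ext_def g_def)
    ultimately have "g \<in> Gs" using w unfolding Gs_def by auto
    moreover have "\<forall>u<n. sched w u = g u" unfolding g_def by simp
    ultimately show "w \<in> (\<Union>g\<in>Gs. {w\<in>space M. \<forall>u<n. sched w u = g u})"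
      using w by blast
  next
    fix w assume "w \<in> (\<Union>g\<in>Gs. {w\<in>space M. \<forall>u<n. sched w u = g u})"
    then obtain g where g: "g \<in> Gs" "w \<in> space M" "\<forall>u<n. sched w u = g u" by auto
    have "G (sched w) = G (ext g)" by (rule prefix) (use g in \<open>auto simp: ext_def\<close>)
    with g show "w \<in> {w\<in>space M. G (sched w) \<in> A}" unfolding Gs_def by auto
  qed
  ultimately show ?thesis
    by (simp only:) (rule sets.finite_UN, assumption, rule sets_schedule_prefix[OF events])
qed

lemma markov_chain_from_debts:
  fixes sched :: "'w \<Rightarrow> nat \<Rightarrow> 'x option"
  assumes "prob_space M" "finite S"
    and vals: "\<forall>w\<in>space M. \<forall>t. set_option (sched w t) \<subseteq> S"
    and events: "\<forall>t a. {w\<in>space M. sched w t = a} \<in> sets M"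
    and "markov_chain_with M (\<lambda>w k. sys_state S tau r qs (sched w) k) p"
  shows "markov_chain_from M (\<lambda>w k. sys_state S tau r qs (sched w) k) p (\<lambda>X\<in>S. 0)"
proof (intro markov_chain_from.intro markov_chain_from_axioms.intro)
  show "sys_state S tau r qs (sched w) 0 = (\<lambda>X\<in>S. 0)" for w
    by (simp add: sys_state_def)
  fix k
  have "{w\<in>space M. map (sys_state S tau r qs (sched w)) [1..<Suc k] \<in> A} \<in> sets M" for A
  proof (rule sets_prefix_determined[OF vals \<open>finite S\<close> events])
    fix sg sg' :: "nat \<Rightarrow> 'x option"
    assume "\<forall>u<k * frame_len S tau. sg u = sg' u"
    then show "map (sys_state S tau r qs sg) [1..<Suc k] = map (sys_state S tau r qs sg') [1..<Suc k]"
      by (intro map_cong refl sys_state_prefix_eq) auto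
  qed
  then show "(\<lambda>w. map (sys_state S tau r qs (sched w)) [1..<Suc k]) \<in> M \<rightarrow>\<^sub>M count_space UNIV"
    by (intro measurableI) (simp_all add: Int_def conj_commute vimage_def)
qed (fact assms)+

theorem lemma3:
  fixes M :: "'w measure"
    and S :: "'x set"
    and tau :: "'x \<Rightarrow> nat"
    and r :: "'x \<Rightarrow> nat \<Rightarrow> real"
    and qs :: "'x \<Rightarrow> real"
    and sched :: "'w \<Rightarrow> nat \<Rightarrow> 'x option"
    and p :: "('x \<Rightarrow> real) \<Rightarrow> ('x \<Rightarrow> real) pmf"
  assumes "prob_space M"
    and "finite S"
    and "\<forall>X\<in>S. tau X > 0"
    and "\<forall>X\<in>S. \<forall>i. 1 \<le> i \<and> i < tau X \<longrightarrow> r X (Suc i) \<le> r X i"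
    and "\<forall>X\<in>S. \<forall>i\<in>{1..tau X}. 0 \<le> r X i"
    and "\<forall>X\<in>S. qs X > 0"
    and "\<forall>w\<in>space M. \<forall>t. set_option (sched w t) \<subseteq> S"
    and "\<forall>t a. {w\<in>space M. sched w t = a} \<in> sets M"
    and "markov_chain_with M (\<lambda>w k. sys_state S tau r qs (sched w) k) p"
    and "irreducible_on p (reachable_states p (\<lambda>X\<in>S. 0))"
    and "positive_recurrent_on p (reachable_states p (\<lambda>X\<in>S. 0))"
  shows "\<forall>X\<in>S. AE w in M. avg_reward S tau r (sched w) X \<ge> ereal (qs X)"
proof -
  let ?zero = "\<lambda>X\<in>S. 0 :: real"
  interpret debts: markov_chain_from M "\<lambda>w k. sys_state S tau r qs (sched w) k" p ?zero
    using assms(1,2,7,8,9) by (rule markov_chain_from_debts)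
  have "?zero \<in> reachable_states p ?zero"
    unfolding reachable_states_def by (auto intro: exI[of _ 0])
  then have recurrent: "positive_recurrent p ?zero"
    using assms(11) unfolding positive_recurrent_on_def by blast
  have T: "frame_len S tau > 0" by (rule frame_len_pos[OF assms(2,3)])
  show ?thesis
  proof
    fix X assume "X \<in> S"
    from debts.AE_return[OF recurrent] debts.AE_eventually_short_excursions[OF recurrent]
    show "AE w in M. ereal (qs X) \<le> avg_reward S tau r (sched w) X"
    proof eventually_elim
      case (elim w)
      with \<open>X \<in> S\<close> T assms(3,5,6) show ?case
        by (intro avg_reward_ge_of_recurrent_debts) auto
    qed
  qed
qed

end
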